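(* Let $A=[a_{ij}]\in M_{m,n}(\mathbb{R})$ have rank $r>1$ and be diagonally eliminable up to $r$, and let $0\leq k<r$. Then the Gauss-Jordan operation matrix $\mathcal{G}_{2k+1}=[g^{(2k+1)}_{ij}]_{m\times m}$ satisfies $g^{(2k+1)}_{ij}=0$ for $i\neq j$, $g^{(2k+1)}_{ii}=1$ for $i\neq k+1$, and $g^{(2k+1)}_{k+1,k+1}=\dfrac{m_k}{m_{k+1}}$; and $\mathcal{G}_{2k+2}=[g^{(2k+2)}_{ij}]_{m\times m}$ satisfies $$g^{(2k+2)}_{ij}=\begin{cases}0 & \text{if } j\notin\{i,k+1\},\\ 1 & \text{if } i=j,\\ (-1)^{k+i+1}\dfrac{m^{1\dots k}_{1\dots i-1,\,i+1\dots k+1}}{m_k} & \text{if } 1\leq i\leq k,\ j=k+1,\\[2mm] -\dfrac{m^{1\dots k\,i}_{1\dots k\,k+1}}{m_k} & \text{if } k+1<i\leq m,\ j=k+1.\end{cases}$$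
   Context: Gauss-Jordan procedure: for $A\in M_{m,n}(\mathbb{R})$ set $A^{(0)}=A$. For $k\geq 0$, if $A^{(2k)}=[a^{(2k)}_{ij}]$ is defined and $a^{(2k)}_{k+1,k+1}\neq 0$, let $\mathcal{G}_{2k+1}$ be the $m\times m$ diagonal matrix with all diagonal entries $1$ except the $(k+1,k+1)$ entry, which is $1/a^{(2k)}_{k+1,k+1}$, and set $A^{(2k+1)}=\mathcal{G}_{2k+1}A^{(2k)}=[a^{(2k+1)}_{ij}]$; then let $\mathcal{G}_{2k+2}=[g_{ij}]_{m\times m}$ with $g_{ii}=1$, $g_{i,k+1}=-a^{(2k+1)}_{i,k+1}$ for $i\neq k+1$, and all other entries $0$, and set $A^{(2k+2)}=\mathcal{G}_{2k+2}A^{(2k+1)}$. The $\mathcal{G}_q$ are the Gauss-Jordan operation matrices. A matrix $A$ of rank $r\geq 1$ is diagonally eliminable up to $r$ if for each $k=1,\dots,r$ the matrix $A^{(2k-2)}$ is defined and $a^{(2k-2)}_{kk}\neq 0$. Minors: $m^{i_1\dots i_p}_{j_1\dots j_p}$ (increasing indices) is the determinant of the submatrix of $A$ with rows $i_1,\dots,i_p$ and columns $j_1,\dots,j_p$; $m^{1\dots k}_{1\dots i-1,\,i+1\dots k+1}$ uses rows $1,\dots,k$ and columns $1,\dots,k+1$ with $i$ removed. $m_k=m^{1\dots k}_{1\dots k}$ and $m_0=1$. *)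

theory Defs
  imports "Jordan_Normal_Form.DL_Rank_Submatrix" "Jordan_Normal_Form.Determinant"
begin

text \<open>Matrices are JNF matrices (0-based internally). The functions ent and minor below
  expose the paper's 1-based indexing: ent G i j is the (i,j) entry with 1 \<le> i,j.\<close>

definition ent :: "'a mat \<Rightarrow> nat \<Rightarrow> nat \<Rightarrow> 'a" where
  "ent G i j = G $$ (i - 1, j - 1)"

definition minor :: "'a::comm_ring_1 mat \<Rightarrow> nat set \<Rightarrow> nat set \<Rightarrow> 'a" where
  "minor A I J = det (submatrix A ((\<lambda>i. i - 1) ` I) ((\<lambda>j. j - 1) ` J))"

text \<open>Leading principal minor m_k (m_0 = 1 as determinant of the empty matrix).\<close>
definition lminor :: "'a::comm_ring_1 mat \<Rightarrow> nat \<Rightarrow> 'a" where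
  "lminor A k = minor A {1..k} {1..k}"

text \<open>Gauss-Jordan operation matrices, built from the current matrix B; the pivot is the
  0-based index p (= paper index k+1 with p = k).\<close>
definition gj_odd :: "real mat \<Rightarrow> nat \<Rightarrow> real mat" where
  "gj_odd B p = mat (dim_row B) (dim_row B)
     (\<lambda>(i,j). if i = j then (if i = p then 1 / B $$ (p,p) else 1) else 0)"

definition gj_even :: "real mat \<Rightarrow> nat \<Rightarrow> real mat" where
  "gj_even C p = mat (dim_row C) (dim_row C)
     (\<lambda>(i,j). if i = j then 1 else if j = p then - C $$ (i,p) else 0)"

text \<open>gj_seq A q = Some A^(q) if A^(q) is defined, None otherwise.\<close>
fun gj_seq :: "real mat \<Rightarrow> nat \<Rightarrow> real mat option" where
  "gj_seq A 0 = Some A"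
| "gj_seq A (Suc q) =
     (case gj_seq A q of
        None \<Rightarrow> None
      | Some B \<Rightarrow>
          (if even q then
             (if q div 2 < dim_row B \<and> q div 2 < dim_col B \<and> B $$ (q div 2, q div 2) \<noteq> 0
              then Some (gj_odd B (q div 2) * B) else None)
           else Some (gj_even B (q div 2) * B)))"

fun gj_op :: "real mat \<Rightarrow> nat \<Rightarrow> real mat option" where
  "gj_op A 0 = None"
| "gj_op A (Suc q) =
     (case gj_seq A q of
        None \<Rightarrow> None
      | Some B \<Rightarrow>
          (if even q then
             (if q div 2 < dim_row B \<and> q div 2 < dim_col B \<and> B $$ (q div 2, q div 2) \<noteq> 0
              then Some (gj_odd B (q div 2)) else None)
           else Some (gj_even B (q div 2))))"

definition diag_elim_upto :: "real mat \<Rightarrow> nat \<Rightarrow> bool" where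
  "diag_elim_upto A r \<longleftrightarrow>
     (\<forall>k\<in>{1..r}. \<exists>B. gj_seq A (2*k - 2) = Some B \<and> k \<le> dim_row B \<and> k \<le> dim_col B
        \<and> ent B k k \<noteq> 0)"

end

theory Submission
  imports Defs
begin

(*
  After 2k steps, A^(2k) = E A, where E is the product of the operation matrices applied so far.
  Its first k columns are the unit vectors e_1, ..., e_k, and columns k+1, ..., m of E are still
  unit vectors. Consequently every minor of A^(2k) whose row set contains rows 1, ..., k equals
  det E_k times the corresponding minor of A, with E_k the leading k x k block of E; the leading
  k x k block of A^(2k) is the identity, so det E_k = 1/m_k. Because the first k columns of A^(2k)
  are unit vectors, its minors on rows {1..k, i} x columns {1..k+1} and on rows {1..k} x
  columns {1..k+1} - {i} reduce to a^(2k)_{i,k+1} up to sign. The matrices G_(2k+1) and G_(2k+2)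
  are read off from column k+1 of A^(2k), which gives the stated formulas.
*)

definition reindex_mat :: "'a mat \<Rightarrow> (nat \<Rightarrow> nat) \<Rightarrow> (nat \<Rightarrow> nat) \<Rightarrow> nat \<Rightarrow> nat \<Rightarrow> 'a mat" where
  "reindex_mat X f g s t = mat s t (\<lambda>(p, q). X $$ (f p, g q))"

lemma reindex_mat_carrier [simp]: "reindex_mat X f g s t \<in> carrier_mat s t"
  and dim_row_reindex_mat [simp]: "dim_row (reindex_mat X f g s t) = s"
  and dim_col_reindex_mat [simp]: "dim_col (reindex_mat X f g s t) = t"
  unfolding reindex_mat_def by simp_all

lemma index_reindex_mat [simp]:
  "p < s \<Longrightarrow> q < t \<Longrightarrow> reindex_mat X f g s t $$ (p, q) = X $$ (f p, g q)"
  unfolding reindex_mat_def by simp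

lemma pick_strict_mono_image:
  assumes "strict_mono f" "j < N"
  shows "pick (f ` {..<N}) j = f j"
  using assms(2)
proof (induction j)
  case 0
  show ?case unfolding pick.simps
  proof (rule Least_equality)
    show "f 0 \<in> f ` {..<N}" using 0 by auto
    fix y assume "y \<in> f ` {..<N}"
    then show "f 0 \<le> y" using assms(1) by (auto simp: strict_mono_less_eq)
  qed
next
  case (Suc j)
  then have IH: "pick (f ` {..<N}) j = f j" by simp
  show ?case unfolding pick.simps IH
  proof (rule Least_equality)
    show "f (Suc j) \<in> f ` {..<N} \<and> f j < f (Suc j)"
      using Suc.prems assms(1) by (auto simp: strict_mono_def)
    fix y assume "y \<in> f ` {..<N} \<and> f j < y"
    then obtain l where "y = f l" "j < l" using assms(1) by (auto simp: strict_mono_less)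
    then show "f (Suc j) \<le> y" using assms(1) by (simp add: strict_mono_less_eq)
  qed
qed

lemma submatrix_strict_mono_image:
  assumes f: "strict_mono f" and g: "strict_mono g" and A: "A \<in> carrier_mat m n"
    and "\<forall>p<N. f p < m" and "\<forall>q<M. g q < n"
  shows "submatrix A (f ` {..<N}) (g ` {..<M}) = reindex_mat A f g N M"
proof -
  have rows: "{i. i < dim_row A \<and> i \<in> f ` {..<N}} = f ` {..<N}"
    and cols: "{j. j < dim_col A \<and> j \<in> g ` {..<M}} = g ` {..<M}"
    using assms(4,5) A by auto
  have "card (f ` {..<N}) = N" "card (g ` {..<M}) = M"
    using strict_mono_imp_inj_on[OF f] strict_mono_imp_inj_on[OF g]
    by (simp_all add: card_image inj_on_subset)
  then show ?thesis unfolding submatrix_def reindex_mat_def rows cols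
    by (intro eq_matI) (auto simp: pick_strict_mono_image[OF f] pick_strict_mono_image[OF g])
qed

lemma reindex_mat_mult:
  assumes E: "E \<in> carrier_mat m m" and A: "A \<in> carrier_mat m n"
    and inj: "inj_on f {..<s}" and f: "\<forall>p<s. f p < m" and g: "\<forall>q<t. g q < n"
    and E_outside: "\<forall>p<s. \<forall>l<m. l \<notin> f ` {..<s} \<longrightarrow> E $$ (f p, l) = 0"
  shows "reindex_mat (E * A) f g s t = reindex_mat E f f s s * reindex_mat A f g s t"
proof (rule eq_matI)
  fix p q assume "p < dim_row (reindex_mat E f f s s * reindex_mat A f g s t)"
    and "q < dim_col (reindex_mat E f f s s * reindex_mat A f g s t)"
  then have p: "p < s" and q: "q < t" by auto
  have "reindex_mat (E * A) f g s t $$ (p, q) = (\<Sum>l\<in>{0..<m}. E $$ (f p, l) * A $$ (l, g q))"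
    using p q f g E A by (simp add: scalar_prod_def)
  also have "\<dots> = (\<Sum>l\<in>f ` {..<s}. E $$ (f p, l) * A $$ (l, g q))"
    by (rule sum.mono_neutral_right) (use f E_outside p in auto)
  also have "\<dots> = (\<Sum>p'<s. E $$ (f p, f p') * A $$ (f p', g q))"
    by (simp add: sum.reindex[OF inj])
  also have "\<dots> = (reindex_mat E f f s s * reindex_mat A f g s t) $$ (p, q)"
    using p q by (simp add: scalar_prod_def atLeast0LessThan)
  finally show "reindex_mat (E * A) f g s t $$ (p, q)
      = (reindex_mat E f f s s * reindex_mat A f g s t) $$ (p, q)" .
qed auto

definition succ_above :: "nat \<Rightarrow> nat \<Rightarrow> nat" where
  "succ_above i q = (if q < i then q else Suc q)"

definition prefix_then :: "nat \<Rightarrow> nat \<Rightarrow> nat \<Rightarrow> nat" where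
  "prefix_then k i p = (if p < k then p else p + i - k)"

lemma strict_mono_succ_above: "strict_mono (succ_above i)"
  unfolding strict_mono_def succ_above_def by auto

lemma strict_mono_prefix_then: "k \<le> i \<Longrightarrow> strict_mono (prefix_then k i)"
  unfolding strict_mono_def prefix_then_def by auto

lemma succ_above_image:
  assumes "i \<le> k"
  shows "succ_above i ` {..<k} = {..k} - {i}"
proof (intro Set.set_eqI iffI)
  fix x assume "x \<in> succ_above i ` {..<k}"
  then show "x \<in> {..k} - {i}" by (auto simp: succ_above_def)
next
  fix x assume "x \<in> {..k} - {i}"
  then have "x = succ_above i (if x < i then x else x - 1)" "(if x < i then x else x - 1) < k"
    using assms by (auto simp: succ_above_def)
  then show "x \<in> succ_above i ` {..<k}" by blast
qed

lemma prefix_then_image: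
  assumes "k \<le> i"
  shows "prefix_then k i ` {..<Suc k} = insert i {..<k}"
proof (intro Set.set_eqI iffI)
  fix x assume "x \<in> prefix_then k i ` {..<Suc k}"
  then show "x \<in> insert i {..<k}" by (auto simp: prefix_then_def less_Suc_eq)
next
  fix x assume "x \<in> insert i {..<k}"
  then have "x = prefix_then k i (if x < k then x else k)" "(if x < k then x else k) < Suc k"
    using assms by (auto simp: prefix_then_def)
  then show "x \<in> prefix_then k i ` {..<Suc k}" by blast
qed

lemma image_pred_atLeastAtMost: "(\<lambda>x. x - 1) ` {1..k} = {..<k :: nat}"
proof (intro Set.set_eqI iffI)
  fix x assume "x \<in> {..<k}"
  then have "Suc x \<in> {1..k}" by simp
  then show "x \<in> (\<lambda>x. x - 1) ` {1..k}" by (rule image_eqI[rotated]) simp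
qed auto

lemma image_pred_atLeastAtMost_delete:
  assumes "1 \<le> i"
  shows "(\<lambda>x. x - 1) ` ({1..k+1} - {i}) = {..k} - {i - 1 :: nat}"
proof (intro Set.set_eqI iffI)
  fix x assume "x \<in> {..k} - {i - 1}"
  then have "Suc x \<in> {1..k+1} - {i}" using assms by auto
  then show "x \<in> (\<lambda>x. x - 1) ` ({1..k+1} - {i})" by (rule image_eqI[rotated]) simp
qed (use assms in auto)

lemma lminor_eq_det_reindex:
  assumes "A \<in> carrier_mat m n" "k \<le> m" "k \<le> n"
  shows "lminor A k = det (reindex_mat A id id k k)"
  unfolding lminor_def minor_def image_pred_atLeastAtMost
  using submatrix_strict_mono_image[of id id A m n k k] assms by (simp add: strict_mono_def)

lemma minor_insert_row_eq_det_reindex: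
  assumes "A \<in> carrier_mat m n" "k < i" "i \<le> m" "k < n"
  shows "minor A (insert i {1..k}) {1..k+1}
    = det (reindex_mat A (prefix_then k (i - 1)) id (Suc k) (Suc k))"
proof -
  have rows: "(\<lambda>x. x - 1) ` insert i {1..k} = prefix_then k (i - 1) ` {..<Suc k}"
    unfolding image_insert image_pred_atLeastAtMost using assms(2) by (simp add: prefix_then_image)
  have cols: "(\<lambda>x. x - 1) ` {1..k+1} = id ` {..<Suc k}"
    using image_pred_atLeastAtMost[of "k+1"] by simp
  have "submatrix A (prefix_then k (i - 1) ` {..<Suc k}) (id ` {..<Suc k})
      = reindex_mat A (prefix_then k (i - 1)) id (Suc k) (Suc k)"
    by (rule submatrix_strict_mono_image[OF strict_mono_prefix_then])
      (use assms in \<open>auto simp: strict_mono_def prefix_then_def\<close>)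
  then show ?thesis unfolding minor_def rows cols by simp
qed

lemma minor_delete_col_eq_det_reindex:
  assumes "A \<in> carrier_mat m n" "1 \<le> i" "i \<le> k" "k \<le> m" "k < n"
  shows "minor A {1..k} ({1..k+1} - {i}) = det (reindex_mat A id (succ_above (i - 1)) k k)"
proof -
  have rows: "(\<lambda>x. x - 1) ` {1..k} = id ` {..<k}"
    using image_pred_atLeastAtMost by simp
  have cols: "(\<lambda>x. x - 1) ` ({1..k+1} - {i}) = succ_above (i - 1) ` {..<k}"
    unfolding image_pred_atLeastAtMost_delete[OF assms(2)] using assms(2,3) by (simp add: succ_above_image)
  have "submatrix A (id ` {..<k}) (succ_above (i - 1) ` {..<k})
      = reindex_mat A id (succ_above (i - 1)) k k"
    by (rule submatrix_strict_mono_image[OF _ strict_mono_succ_above])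
      (use assms in \<open>auto simp: strict_mono_def succ_above_def\<close>)
  then show ?thesis unfolding minor_def rows cols by simp
qed

lemma gj_odd_carrier [simp]: "B \<in> carrier_mat m n \<Longrightarrow> gj_odd B p \<in> carrier_mat m m"
  unfolding gj_odd_def by simp

lemma gj_even_carrier [simp]: "C \<in> carrier_mat m n \<Longrightarrow> gj_even C p \<in> carrier_mat m m"
  unfolding gj_even_def by simp

lemma index_gj_odd_mult:
  assumes B: "B \<in> carrier_mat m n" and X: "X \<in> carrier_mat m t" and "i < m" "j < t" "p < m"
  shows "(gj_odd B p * X) $$ (i, j) = (if i = p then X $$ (p, j) / B $$ (p, p) else X $$ (i, j))"
proof -
  have "(gj_odd B p * X) $$ (i, j) = (\<Sum>l\<in>{0..<m}. gj_odd B p $$ (i, l) * X $$ (l, j))"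
    using assms by (simp add: scalar_prod_def gj_odd_def)
  also have "\<dots> = (\<Sum>l\<in>{0..<m}. if l = i
      then (if i = p then X $$ (p, j) / B $$ (p, p) else X $$ (i, j)) else 0)"
    by (rule sum.cong) (use assms in \<open>auto simp: gj_odd_def\<close>)
  finally show ?thesis using \<open>i < m\<close> by simp
qed

lemma index_gj_even_mult:
  assumes C: "C \<in> carrier_mat m n" and X: "X \<in> carrier_mat m t" and "i < m" "j < t" "p < m"
  shows "(gj_even C p * X) $$ (i, j)
    = (if i = p then X $$ (p, j) else X $$ (i, j) - C $$ (i, p) * X $$ (p, j))"
proof -
  have "(gj_even C p * X) $$ (i, j) = (\<Sum>l\<in>{0..<m}. gj_even C p $$ (i, l) * X $$ (l, j))"
    using assms by (simp add: scalar_prod_def gj_even_def)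
  also have "\<dots> = (\<Sum>l\<in>{0..<m}. (if l = i then X $$ (i, j) else 0)
      + (if l = p then (if i = p then 0 else - C $$ (i, p) * X $$ (p, j)) else 0))"
    by (rule sum.cong) (use assms in \<open>auto simp: gj_even_def\<close>)
  finally show ?thesis using assms by (simp add: sum.distrib)
qed

lemma ent_gj_odd:
  assumes "B \<in> carrier_mat m n" "i \<in> {1..m}" "j \<in> {1..m}"
  shows "ent (gj_odd B p) i j = (if i = j then if i = p + 1 then 1 / B $$ (p, p) else 1 else 0)"
  using assms by (auto simp: ent_def gj_odd_def)

lemma ent_gj_even:
  assumes "C \<in> carrier_mat m n" "i \<in> {1..m}" "j \<in> {1..m}"
  shows "ent (gj_even C p) i j = (if i = j then 1 else if j = p + 1 then - C $$ (i - 1, p) else 0)"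
  using assms by (auto simp: ent_def gj_even_def)

lemma gj_step_defined:
  assumes "gj_seq A (2 * k) = Some B" "k < dim_row B" "k < dim_col B" "B $$ (k, k) \<noteq> 0"
  shows "gj_op A (2 * k + 1) = Some (gj_odd B k)"
    and "gj_op A (2 * k + 2) = Some (gj_even (gj_odd B k * B) k)"
    and "gj_seq A (2 * k + 2) = Some (gj_even (gj_odd B k * B) k * (gj_odd B k * B))"
proof -
  have seq_odd: "gj_seq A (Suc (2 * k)) = Some (gj_odd B k * B)"
    using assms by simp
  show "gj_op A (2 * k + 1) = Some (gj_odd B k)"
    using assms by simp
  have two_steps: "2 * k + 2 = Suc (Suc (2 * k))" by simp
  show "gj_op A (2 * k + 2) = Some (gj_even (gj_odd B k * B) k)"
    and "gj_seq A (2 * k + 2) = Some (gj_even (gj_odd B k * B) k * (gj_odd B k * B))"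
    unfolding two_steps gj_op.simps(2)[of A "Suc (2 * k)"] gj_seq.simps(2)[of A "Suc (2 * k)"] seq_odd
    by simp_all
qed

lemma diag_elim_upto_pivot:
  assumes "diag_elim_upto A r" "k < r" "gj_seq A (2 * k) = Some B"
  shows "k < dim_row B" "k < dim_col B" "B $$ (k, k) \<noteq> 0"
proof -
  from assms(1,2) obtain B' where "gj_seq A (2 * Suc k - 2) = Some B'"
    "Suc k \<le> dim_row B'" "Suc k \<le> dim_col B'" "ent B' (Suc k) (Suc k) \<noteq> 0"
    unfolding diag_elim_upto_def by force
  moreover have "B' = B" using assms(3) calculation(1) by simp
  ultimately show "k < dim_row B" "k < dim_col B" "B $$ (k, k) \<noteq> 0"
    by (auto simp: ent_def)
qed

(* B and E play the roles of A^(2k) and of the product G_(2k) ... G_1. *)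

definition gj_stage :: "real mat \<Rightarrow> nat \<Rightarrow> nat \<Rightarrow> nat \<Rightarrow> real mat \<Rightarrow> real mat \<Rightarrow> bool" where
  "gj_stage A m n k B E \<longleftrightarrow> B \<in> carrier_mat m n \<and> E \<in> carrier_mat m m \<and> B = E * A
    \<and> (\<forall>i<m. \<forall>l<m. k \<le> l \<longrightarrow> E $$ (i, l) = (if i = l then 1 else 0))
    \<and> (\<forall>i<m. \<forall>j<k. B $$ (i, j) = (if i = j then 1 else 0))"

lemma gj_stage_step:
  assumes stage: "gj_stage A m n k B E" and A: "A \<in> carrier_mat m n"
    and k: "k < m" "k < n" and piv: "B $$ (k, k) \<noteq> 0"
  shows "gj_stage A m n (Suc k) (gj_even (gj_odd B k * B) k * (gj_odd B k * B))
           (gj_even (gj_odd B k * B) k * (gj_odd B k * E))"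
proof -
  from stage have B: "B \<in> carrier_mat m n" and E: "E \<in> carrier_mat m m" and BE: "B = E * A"
    and E_unit: "\<And>i l. i < m \<Longrightarrow> l < m \<Longrightarrow> k \<le> l \<Longrightarrow> E $$ (i, l) = (if i = l then 1 else 0)"
    and B_unit: "\<And>i j. i < m \<Longrightarrow> j < k \<Longrightarrow> B $$ (i, j) = (if i = j then 1 else 0)"
    unfolding gj_stage_def by auto
  define B1 where "B1 = gj_odd B k * B"
  define G2 where "G2 = gj_even B1 k"
  have B1: "B1 \<in> carrier_mat m n" unfolding B1_def by (rule mult_carrier_mat[OF gj_odd_carrier[OF B] B])
  have G1E: "gj_odd B k * E \<in> carrier_mat m m" by (rule mult_carrier_mat[OF gj_odd_carrier[OF B] E])
  have B1_index: "B1 $$ (i, j) = (if i = k then B $$ (k, j) / B $$ (k, k) else B $$ (i, j))"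
    if "i < m" "j < n" for i j
    unfolding B1_def by (rule index_gj_odd_mult[OF B B that k(1)])
  have G1E_index: "(gj_odd B k * E) $$ (i, j) = (if i = k then E $$ (k, j) / B $$ (k, k) else E $$ (i, j))"
    if "i < m" "j < m" for i j
    by (rule index_gj_odd_mult[OF B E that k(1)])
  have G2: "G2 \<in> carrier_mat m m" using B1 by (simp add: G2_def)
  have "B1 = (gj_odd B k * E) * A"
    unfolding B1_def assoc_mult_mat[OF gj_odd_carrier[OF B] E A] by (simp only: BE[symmetric])
  then have prod: "G2 * B1 = (G2 * (gj_odd B k * E)) * A"
    using assoc_mult_mat[OF G2 G1E A] by simp
  have E_unit': "(G2 * (gj_odd B k * E)) $$ (i, l) = (if i = l then 1 else 0)"
    if "i < m" "l < m" "Suc k \<le> l" for i l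
    unfolding G2_def using index_gj_even_mult[OF B1 G1E that(1,2) k(1)] that G1E_index E_unit k
    by auto
  have B_unit': "(G2 * B1) $$ (i, j) = (if i = j then 1 else 0)" if "i < m" "j < Suc k" for i j
  proof -
    have "(G2 * B1) $$ (i, j) = (if i = k then B1 $$ (k, j) else B1 $$ (i, j) - B1 $$ (i, k) * B1 $$ (k, j))"
      unfolding G2_def using index_gj_even_mult[OF B1 B1 that(1) _ k(1)] that k by auto
    then show ?thesis using that B1_index B_unit k piv by (cases "j = k") auto
  qed
  show ?thesis
    unfolding gj_stage_def G2_def[symmetric] B1_def[symmetric]
    using prod E_unit' B_unit' G2 B1 G1E by (metis mult_carrier_mat)
qed

lemma gj_stage_exists:
  assumes A: "A \<in> carrier_mat m n" and elim: "diag_elim_upto A r" and "k \<le> r"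
  shows "\<exists>B E. gj_seq A (2 * k) = Some B \<and> gj_stage A m n k B E"
  using \<open>k \<le> r\<close>
proof (induction k)
  case 0
  have "gj_stage A m n 0 A (1\<^sub>m m)" unfolding gj_stage_def using A by auto
  then show ?case by auto
next
  case (Suc k)
  then obtain B E where seq: "gj_seq A (2 * k) = Some B" and stage: "gj_stage A m n k B E" by auto
  have B: "B \<in> carrier_mat m n" using stage unfolding gj_stage_def by blast
  have "k < r" using Suc.prems by simp
  note pivot = diag_elim_upto_pivot[OF elim this seq]
  have "gj_seq A (2 * Suc k) = Some (gj_even (gj_odd B k * B) k * (gj_odd B k * B))"
    using gj_step_defined(3)[OF seq pivot] by simp
  moreover have "gj_stage A m n (Suc k) (gj_even (gj_odd B k * B) k * (gj_odd B k * B))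
      (gj_even (gj_odd B k * B) k * (gj_odd B k * E))"
    using gj_stage_step[OF stage A _ _ pivot(3)] pivot B by simp
  ultimately show ?case by blast
qed

lemma gj_stage_at_pivot:
  assumes A: "A \<in> carrier_mat m n" and elim: "diag_elim_upto A r" and "k < r"
  obtains B E where "gj_seq A (2 * k) = Some B" "gj_stage A m n k B E"
    "k < dim_row B" "k < dim_col B" "B $$ (k, k) \<noteq> 0"
  using gj_stage_exists[OF A elim, of k] diag_elim_upto_pivot[OF elim \<open>k < r\<close>] \<open>k < r\<close>
  by force

lemma gj_stage_det_leading:
  assumes stage: "gj_stage A m n k B E" and A: "A \<in> carrier_mat m n" and "k \<le> m" "k \<le> n"
  shows "det (reindex_mat E id id k k) = 1 / lminor A k"
proof -
  from stage have E: "E \<in> carrier_mat m m" and BE: "B = E * A"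
    and E_unit: "\<forall>i<m. \<forall>l<m. k \<le> l \<longrightarrow> E $$ (i, l) = (if i = l then 1 else 0)"
    and B_unit: "\<forall>i<m. \<forall>j<k. B $$ (i, j) = (if i = j then 1 else 0)"
    unfolding gj_stage_def by auto
  have "reindex_mat B id id k k = 1\<^sub>m k"
    by (rule eq_matI) (use B_unit assms in auto)
  moreover have "reindex_mat B id id k k = reindex_mat E id id k k * reindex_mat A id id k k"
    unfolding BE by (rule reindex_mat_mult[OF E A]) (use assms E_unit in auto)
  ultimately have "det (reindex_mat E id id k k) * lminor A k = 1"
    unfolding lminor_eq_det_reindex[OF A assms(3,4)] by (metis det_mult det_one reindex_mat_carrier)
  then show ?thesis by (auto simp: eq_divide_eq)
qed

lemma gj_stage_entry_below_eq_det:
  assumes stage: "gj_stage A m n k B E" and A: "A \<in> carrier_mat m n"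
    and k: "k \<le> i" "i < m" "k < n"
  shows "B $$ (i, k) = det (reindex_mat E id id k k)
    * det (reindex_mat A (prefix_then k i) id (Suc k) (Suc k))"
proof -
  from stage have E: "E \<in> carrier_mat m m" and BE: "B = E * A"
    and E_unit: "\<And>i l. i < m \<Longrightarrow> l < m \<Longrightarrow> k \<le> l \<Longrightarrow> E $$ (i, l) = (if i = l then 1 else 0)"
    and B_unit: "\<And>i j. i < m \<Longrightarrow> j < k \<Longrightarrow> B $$ (i, j) = (if i = j then 1 else 0)"
    unfolding gj_stage_def by auto
  let ?f = "prefix_then k i"
  have f: "\<forall>p<Suc k. ?f p < m" using k by (auto simp: prefix_then_def)
  have "reindex_mat B ?f id (Suc k) (Suc k)
      = reindex_mat E ?f ?f (Suc k) (Suc k) * reindex_mat A ?f id (Suc k) (Suc k)"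
    unfolding BE
  proof (rule reindex_mat_mult[OF E A _ f])
    show "inj_on ?f {..<Suc k}"
      using strict_mono_imp_inj_on[OF strict_mono_prefix_then[OF k(1)]] by (simp add: inj_on_subset)
    show "\<forall>p<Suc k. \<forall>l<m. l \<notin> ?f ` {..<Suc k} \<longrightarrow> E $$ (?f p, l) = 0"
      using prefix_then_image[OF k(1)] f E_unit by (auto simp: prefix_then_def)
  qed (use k in auto)
  moreover have "det (reindex_mat B ?f id (Suc k) (Suc k)) = B $$ (i, k)"
  proof -
    let ?M = "reindex_mat B ?f id (Suc k) (Suc k)"
    have "upper_triangular ?M"
      unfolding upper_triangular_def using B_unit f k by (auto simp: prefix_then_def)
    then have "det ?M = prod_list (diag_mat ?M)"
      by (rule det_upper_triangular[OF _ reindex_mat_carrier])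
    also have "\<dots> = prod_list (map (\<lambda>p. ?M $$ (p, p)) [0..<k]) * B $$ (i, k)"
      using k by (simp add: diag_mat_def prefix_then_def)
    also have "map (\<lambda>p. ?M $$ (p, p)) [0..<k] = map (\<lambda>p. 1) [0..<k]"
      using B_unit k by (auto simp: prefix_then_def)
    finally show ?thesis by (simp add: map_replicate_const id_def)
  qed
  moreover have "det (reindex_mat E ?f ?f (Suc k) (Suc k)) = det (reindex_mat E id id k k)"
  proof -
    let ?M = "reindex_mat E ?f ?f (Suc k) (Suc k)"
    have "det ?M = (\<Sum>p<Suc k. ?M $$ (p, k) * cofactor ?M p k)"
      by (rule laplace_expansion_column[OF reindex_mat_carrier]) simp
    also have "\<dots> = (\<Sum>p<Suc k. if p = k then cofactor ?M k k else 0)"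
      by (rule sum.cong) (use k f E_unit in \<open>auto simp: prefix_then_def\<close>)
    also have "\<dots> = cofactor ?M k k" by simp
    also have "mat_delete ?M k k = reindex_mat E id id k k"
      unfolding mat_delete_def by (rule eq_matI) (auto simp: prefix_then_def)
    then have "cofactor ?M k k = det (reindex_mat E id id k k)"
      unfolding cofactor_def by (simp add: power_add[symmetric] mult_2[symmetric])
    finally show ?thesis .
  qed
  ultimately show ?thesis by (metis det_mult reindex_mat_carrier)
qed

lemma gj_stage_entry_above_eq_det:
  assumes stage: "gj_stage A m n k B E" and A: "A \<in> carrier_mat m n"
    and k: "i < k" "k \<le> m" "k < n"
  shows "(-1) ^ (i + k - 1) * B $$ (i, k)
    = det (reindex_mat E id id k k) * det (reindex_mat A id (succ_above i) k k)"
proof -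
  from stage have E: "E \<in> carrier_mat m m" and BE: "B = E * A"
    and E_unit: "\<forall>i<m. \<forall>l<m. k \<le> l \<longrightarrow> E $$ (i, l) = (if i = l then 1 else 0)"
    and B_unit: "\<And>i j. i < m \<Longrightarrow> j < k \<Longrightarrow> B $$ (i, j) = (if i = j then 1 else 0)"
    unfolding gj_stage_def by auto
  obtain k0 where k0: "k = Suc k0" using k by (cases k) auto
  let ?M = "reindex_mat B id (succ_above i) k k"
  have prod: "?M = reindex_mat E id id k k * reindex_mat A id (succ_above i) k k"
    unfolding BE by (rule reindex_mat_mult[OF E A]) (use k E_unit in \<open>auto simp: succ_above_def\<close>)
  have "mat_delete ?M i k0 = 1\<^sub>m k0"
    unfolding mat_delete_def by (rule eq_matI) (use k k0 B_unit in \<open>auto simp: succ_above_def\<close>)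
  then have cof: "cofactor ?M i k0 = (-1) ^ (i + k0)"
    unfolding cofactor_def by simp
  have "det ?M = (\<Sum>q<k. ?M $$ (i, q) * cofactor ?M i q)"
    by (rule laplace_expansion_row[OF reindex_mat_carrier]) (use k in simp)
  also have "\<dots> = (\<Sum>q<k. if q = k0 then B $$ (i, k) * cofactor ?M i k0 else 0)"
    by (rule sum.cong) (use k k0 B_unit in \<open>auto simp: succ_above_def\<close>)
  also have "\<dots> = (-1) ^ (i + k - 1) * B $$ (i, k)"
    using k0 cof by simp
  finally show ?thesis
    using prod by (simp add: det_mult[OF reindex_mat_carrier reindex_mat_carrier])
qed

lemma gj_stage_pivot_column_below:
  assumes stage: "gj_stage A m n k B E" and A: "A \<in> carrier_mat m n"
    and "k < i" "i \<le> m" "k < n"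
  shows "B $$ (i - 1, k) = minor A (insert i {1..k}) {1..k+1} / lminor A k"
  using gj_stage_entry_below_eq_det[OF stage A, of "i - 1"] gj_stage_det_leading[OF stage A]
    minor_insert_row_eq_det_reindex[OF A] assms(3-5)
  by simp

lemma gj_stage_pivot_column_above:
  assumes stage: "gj_stage A m n k B E" and A: "A \<in> carrier_mat m n"
    and "1 \<le> i" "i \<le> k" "k \<le> m" "k < n"
  shows "B $$ (i - 1, k) = (-1) ^ (k + i) * minor A {1..k} ({1..k+1} - {i}) / lminor A k"
proof -
  have "k + i = (i - 1 + k - 1) + 2" using assms(3,4) by arith
  then have sign: "(-1 :: real) ^ (k + i) = (-1) ^ (i - 1 + k - 1)" by (simp add: power_add)
  have "B $$ (i - 1, k) = (-1) ^ (k + i) * ((-1) ^ (k + i) * B $$ (i - 1, k))"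
    by (simp flip: mult.assoc power_mult_distrib)
  also have "\<dots> = (-1) ^ (k + i) * (minor A {1..k} ({1..k+1} - {i}) / lminor A k)"
    unfolding sign
    using gj_stage_entry_above_eq_det[OF stage A, of "i - 1"] gj_stage_det_leading[OF stage A]
      minor_delete_col_eq_det_reindex[OF A] assms(3-6)
    by simp
  finally show ?thesis by simp
qed

lemma gj_stage_pivot:
  assumes "gj_stage A m n k B E" "A \<in> carrier_mat m n" "k < m" "k < n"
  shows "B $$ (k, k) = lminor A (k + 1) / lminor A k"
proof -
  have "insert (k + 1) {1..k} = {1..k+1}" by auto
  then have "minor A (insert (k + 1) {1..k}) {1..k+1} = lminor A (k + 1)"
    unfolding lminor_def by (simp only:)
  then show ?thesis
    using gj_stage_pivot_column_below[OF assms(1,2), of "k + 1"] assms(3,4) by simp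
qed

lemma ent_gj_even_pivot_column:
  assumes B: "B \<in> carrier_mat m n" and "k < m" "k < n" "i \<in> {1..m}" "i \<noteq> k + 1"
  shows "ent (gj_even (gj_odd B k * B) k) i (k + 1) = - B $$ (i - 1, k)"
proof -
  have "(gj_odd B k * B) $$ (i - 1, k) = B $$ (i - 1, k)"
    using index_gj_odd_mult[OF B B, of "i - 1" k k] assms(2-5) by auto
  then show ?thesis
    using ent_gj_even[OF mult_carrier_mat[OF gj_odd_carrier[OF B] B], of i "k + 1" k] assms(2-5)
    by simp
qed

theorem theorem2p7:
  fixes A :: "real mat" and m n r k :: nat
  assumes "A \<in> carrier_mat m n"
    and "vec_space.rank m A = r"
    and "r > 1"
    and "diag_elim_upto A r"
    and "k < r"
  shows "\<exists>G1 G2. gj_op A (2*k+1) = Some G1 \<and> gj_op A (2*k+2) = Some G2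
     \<and> G1 \<in> carrier_mat m m \<and> G2 \<in> carrier_mat m m
     \<and> (\<forall>i\<in>{1..m}. \<forall>j\<in>{1..m}. i \<noteq> j \<longrightarrow> ent G1 i j = 0)
     \<and> (\<forall>i\<in>{1..m}. i \<noteq> k+1 \<longrightarrow> ent G1 i i = 1)
     \<and> ent G1 (k+1) (k+1) = lminor A k / lminor A (k+1)
     \<and> (\<forall>i\<in>{1..m}. \<forall>j\<in>{1..m}. j \<notin> {i, k+1} \<longrightarrow> ent G2 i j = 0)
     \<and> (\<forall>i\<in>{1..m}. ent G2 i i = 1)
     \<and> (\<forall>i. 1 \<le> i \<and> i \<le> k \<longrightarrow>
          ent G2 i (k+1) = (-1)^(k+i+1) * minor A {1..k} ({1..k+1} - {i}) / lminor A k)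
     \<and> (\<forall>i. k+1 < i \<and> i \<le> m \<longrightarrow>
          ent G2 i (k+1) = - minor A (insert i {1..k}) {1..k+1} / lminor A k)"
proof -
  note A = assms(1)
  obtain B E where seq: "gj_seq A (2 * k) = Some B" and stage: "gj_stage A m n k B E"
    and pivot: "k < dim_row B" "k < dim_col B" "B $$ (k, k) \<noteq> 0"
    using gj_stage_at_pivot[OF A assms(4,5)] .
  have B: "B \<in> carrier_mat m n" using stage unfolding gj_stage_def by blast
  with pivot have km: "k < m" and kn: "k < n" by auto
  have B1: "gj_odd B k * B \<in> carrier_mat m n" by (rule mult_carrier_mat[OF gj_odd_carrier[OF B] B])
  define G1 where "G1 = gj_odd B k"
  define G2 where "G2 = gj_even (gj_odd B k * B) k"
  have ops: "gj_op A (2 * k + 1) = Some G1" "gj_op A (2 * k + 2) = Some G2"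
    unfolding G1_def G2_def by (rule gj_step_defined[OF seq pivot])+
  have above: "ent G2 i (k + 1) = (-1) ^ (k + i + 1) * minor A {1..k} ({1..k+1} - {i}) / lminor A k"
    if "1 \<le> i" "i \<le> k" for i
    using ent_gj_even_pivot_column[OF B km kn, of i] gj_stage_pivot_column_above[OF stage A that]
      km kn that
    by (simp add: G2_def)
  have below: "ent G2 i (k + 1) = - minor A (insert i {1..k}) {1..k+1} / lminor A k"
    if "k + 1 < i" "i \<le> m" for i
    using ent_gj_even_pivot_column[OF B km kn, of i] gj_stage_pivot_column_below[OF stage A _ that(2) kn]
      that
    by (simp add: G2_def)
  have "ent G1 (k + 1) (k + 1) = lminor A k / lminor A (k + 1)"
    using ent_gj_odd[OF B, of "k + 1" "k + 1" k] gj_stage_pivot[OF stage A km kn] km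
    by (simp add: G1_def)
  moreover have "\<forall>i\<in>{1..m}. \<forall>j\<in>{1..m}. i \<noteq> j \<longrightarrow> ent G1 i j = 0"
    and "\<forall>i\<in>{1..m}. i \<noteq> k + 1 \<longrightarrow> ent G1 i i = 1"
    by (simp_all add: G1_def ent_gj_odd[OF B])
  moreover have "\<forall>i\<in>{1..m}. \<forall>j\<in>{1..m}. j \<notin> {i, k + 1} \<longrightarrow> ent G2 i j = 0"
    and "\<forall>i\<in>{1..m}. ent G2 i i = 1"
    by (simp_all add: G2_def ent_gj_even[OF B1])
  moreover have "G1 \<in> carrier_mat m m" "G2 \<in> carrier_mat m m"
    using B B1 by (simp_all add: G1_def G2_def)
  ultimately show ?thesis
    using ops above below by blast
qed

end
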